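(* For every rooted tree $T$ (rooted at $s$) which is a subgraph of the network graph and in which every vertex knows its parent and children, there is a CONGEST algorithm with $\widetilde{O}(D(T))$ rounds and $\widetilde{O}(1)$ congestion at the end of which every vertex $v$ of $T$ knows its heavy/light classification in $T$ and its compressed path $\pi^*(s,v,T)$.
   Context: CONGEST model: synchronous rounds, each vertex has a unique $O(\log n)$-bit ID and may send an $O(\log n)$-bit message to each neighbour per round; $\widetilde{O}$ hides polylog$(n)$ factors; congestion is the maximum total number of messages sent over an edge. $D(T)$ is the diameter of $T$. For a non-leaf vertex $v$ of the rooted tree $T$, its heavy child is the child $v'$ maximizing the number of vertices of the subtree $T_{v'}$ (ties broken arbitrarily but consistently); other children are light children. A vertex is heavy if it is a heavy child and light otherwise (the root is light). For a vertex $v$, let $L=[s=v_0,v_1,\dots,v_k]$ be the ordered list of light vertices on the root-to-$v$ tree path $\pi(s,v,T)$; the compressed path $\pi^*(s,v,T)$ consists of $L$ together with a table mapping each $v_i$ to the number of heavy vertices strictly between $v_i$ and $v_{i+1}$ on $\pi(s,v,T)$, where $v_{k+1}:=v$. *)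

theory Defs
  imports Complex_Main
begin

text \<open>Vertices of the network are identified with their IDs (natural numbers).  The local input of a vertex is
(own ID, n, set of neighbour IDs, whether it belongs to T, its parent in T, its children in T).\<close>

type_synonym msg = "bool list"
type_synonym linput = "nat \<times> nat \<times> nat set \<times> bool \<times> nat option \<times> nat set"
type_synonym state = "linput \<times> (nat \<Rightarrow> msg option) list"
type_synonym outp = "bool \<times> (nat \<times> nat) list"

text \<open>An algorithm: the message a vertex in a given state sends to the neighbour with a given ID
(None = no message), and its current output.  States record the local input and the full history
of received messages (w.l.o.g. for deterministic algorithms with unbounded local computation).\<close>

record alg =
  amsg :: "state \<Rightarrow> nat \<Rightarrow> msg option"
  aout :: "state \<Rightarrow> outp"

fun run :: "alg \<Rightarrow> (nat \<Rightarrow> linput) \<Rightarrow> (nat \<Rightarrow> nat \<Rightarrow> bool) \<Rightarrow> nat \<Rightarrow> nat \<Rightarrow> state" where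
  "run A I E 0 v = (I v, [])"
| "run A I E (Suc r) v =
     (I v, snd (run A I E r v) @ [\<lambda>u. if E u v then amsg A (run A I E r u) v else None])"

definition sent :: "alg \<Rightarrow> (nat \<Rightarrow> linput) \<Rightarrow> (nat \<Rightarrow> nat \<Rightarrow> bool) \<Rightarrow> nat \<Rightarrow> nat \<Rightarrow> nat \<Rightarrow> msg option" where
  "sent A I E t u v = (if E u v then amsg A (run A I E t u) v else None)"

definition edge_load :: "alg \<Rightarrow> (nat \<Rightarrow> linput) \<Rightarrow> (nat \<Rightarrow> nat \<Rightarrow> bool) \<Rightarrow> nat \<Rightarrow> nat \<Rightarrow> nat \<Rightarrow> nat" where
  "edge_load A I E r u v =
     card {t. t < r \<and> sent A I E t u v \<noteq> None} + card {t. t < r \<and> sent A I E t v u \<noteq> None}"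

definition lg :: "nat \<Rightarrow> nat" where
  "lg n = nat \<lceil>log 2 (real n + 2)\<rceil>"

definition up :: "(nat \<Rightarrow> nat option) \<Rightarrow> nat \<Rightarrow> nat \<Rightarrow> nat" where
  "up par k v = ((\<lambda>x. the (par x)) ^^ k) v"

definition rooted_tree_in ::
  "nat set \<Rightarrow> (nat \<Rightarrow> nat \<Rightarrow> bool) \<Rightarrow> nat set \<Rightarrow> nat \<Rightarrow> (nat \<Rightarrow> nat option) \<Rightarrow> bool" where
  "rooted_tree_in V E VT s par \<longleftrightarrow>
     VT \<subseteq> V \<and> s \<in> VT \<and> par s = None \<and>
     (\<forall>v\<in>VT - {s}. \<exists>u\<in>VT. par v = Some u \<and> E u v) \<and>
     (\<forall>v\<in>VT. \<exists>k. up par k v = s)"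

definition depth :: "(nat \<Rightarrow> nat option) \<Rightarrow> nat \<Rightarrow> nat \<Rightarrow> nat" where
  "depth par s v = (LEAST k. up par k v = s)"

definition anc_eq :: "(nat \<Rightarrow> nat option) \<Rightarrow> nat \<Rightarrow> nat \<Rightarrow> nat \<Rightarrow> bool" where
  "anc_eq par s u w \<longleftrightarrow> (\<exists>k \<le> depth par s w. up par k w = u)"

definition children :: "nat set \<Rightarrow> (nat \<Rightarrow> nat option) \<Rightarrow> nat \<Rightarrow> nat set" where
  "children VT par v = {c \<in> VT. par c = Some v}"

definition subtree_size :: "nat set \<Rightarrow> (nat \<Rightarrow> nat option) \<Rightarrow> nat \<Rightarrow> nat \<Rightarrow> nat" where
  "subtree_size VT par s v = card {w \<in> VT. anc_eq par s v w}"

text \<open>Distance in T (via the lowest common ancestor) and diameter D(T).\<close>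
definition tdist :: "nat set \<Rightarrow> (nat \<Rightarrow> nat option) \<Rightarrow> nat \<Rightarrow> nat \<Rightarrow> nat \<Rightarrow> nat" where
  "tdist VT par s u v = Min {depth par s u + depth par s v - 2 * depth par s w | w.
                               w \<in> VT \<and> anc_eq par s w u \<and> anc_eq par s w v}"

definition tdiam :: "nat set \<Rightarrow> (nat \<Rightarrow> nat option) \<Rightarrow> nat \<Rightarrow> nat" where
  "tdiam VT par s = Max {tdist VT par s u v | u v. u \<in> VT \<and> v \<in> VT}"

definition heavy_choice :: "nat set \<Rightarrow> (nat \<Rightarrow> nat option) \<Rightarrow> nat \<Rightarrow> (nat \<Rightarrow> nat) \<Rightarrow> bool" where
  "heavy_choice VT par s hc \<longleftrightarrow>
     (\<forall>v\<in>VT. children VT par v \<noteq> {} \<longrightarrow>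
        hc v \<in> children VT par v \<and>
        (\<forall>c\<in>children VT par v. subtree_size VT par s c \<le> subtree_size VT par s (hc v)))"

definition is_heavy :: "(nat \<Rightarrow> nat option) \<Rightarrow> nat \<Rightarrow> (nat \<Rightarrow> nat) \<Rightarrow> nat \<Rightarrow> bool" where
  "is_heavy par s hc w \<longleftrightarrow> w \<noteq> s \<and> (\<exists>p. par w = Some p \<and> hc p = w)"

definition root_path :: "(nat \<Rightarrow> nat option) \<Rightarrow> nat \<Rightarrow> nat \<Rightarrow> nat list" where
  "root_path par s v = map (\<lambda>i. up par (depth par s v - i) v) [0..<Suc (depth par s v)]"

text \<open>Compressed path: the light vertices v_0 = s, ..., v_k on the path, each paired with the number
of heavy vertices strictly between v_i and v_(i+1), where v_(k+1) = v.\<close>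
definition compressed_path :: "(nat \<Rightarrow> nat option) \<Rightarrow> nat \<Rightarrow> (nat \<Rightarrow> nat) \<Rightarrow> nat \<Rightarrow> (nat \<times> nat) list" where
  "compressed_path par s hc v =
     (let P = root_path par s v;
          H = is_heavy par s hc;
          idx = filter (\<lambda>j. \<not> H (P ! j)) [0..<length P];
          nxt = (\<lambda>m. if Suc m < length idx then idx ! Suc m else depth par s v)
      in map (\<lambda>m. (P ! (idx ! m), length (filter (\<lambda>j. H (P ! j)) [Suc (idx ! m)..<nxt m])))
             [0..<length idx])"

definition local_input ::
  "nat \<Rightarrow> (nat \<Rightarrow> nat \<Rightarrow> bool) \<Rightarrow> nat set \<Rightarrow> (nat \<Rightarrow> nat option) \<Rightarrow> nat \<Rightarrow> linput" where
  "local_input n E VT par v =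
     (v, n, {u. E v u}, v \<in> VT, if v \<in> VT then par v else None, children VT par v)"

end

theory Submission
  imports Defs
begin

text \<open>The algorithm works in two phases on \<open>T\<close>. In a convergecast, every vertex reports
its subtree size to its parent in the round after the last of its children has reported, so the
root has all sizes of its children after at most \<open>D(T)\<close> rounds; every vertex picks a child of
maximum size as its heavy child. In the downcast, a vertex that knows its compressed path and
whether it is heavy computes the compressed path of each child by appending one vertex, and
streams it to that child one \<open>O(log n)\<close>-bit entry per round. Every light vertex on a root path
at least halves the subtree size, so compressed paths have \<open>O(log n)\<close> entries; hence
each tree edge carries \<open>O(log n)\<close> messages and the pipelined downcast ends after
\<open>O(D(T) log n)\<close> rounds.\<close>

fun bits_of_nat :: "nat \<Rightarrow> nat \<Rightarrow> bool list" where
  "bits_of_nat 0 x = []"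
| "bits_of_nat (Suc w) x = odd x # bits_of_nat w (x div 2)"

fun nat_of_bits :: "bool list \<Rightarrow> nat" where
  "nat_of_bits [] = 0"
| "nat_of_bits (b # bs) = of_bool b + 2 * nat_of_bits bs"

lemma length_bits_of_nat [simp]: "length (bits_of_nat w x) = w"
  by (induction w arbitrary: x) auto

lemma nat_of_bits_of_nat: "x < 2 ^ w \<Longrightarrow> nat_of_bits (bits_of_nat w x) = x"
  by (induction w arbitrary: x) auto

lemma lg_ge_1: "1 \<le> lg n"
proof -
  have "1 \<le> log 2 (real n + 2)" by simp
  then show ?thesis unfolding lg_def by linarith
qed

lemma lg_bound: "n + 2 \<le> 2 ^ lg n"
proof -
  have "real n + 2 = 2 powr log 2 (real n + 2)" by simp
  also have "\<dots> \<le> 2 powr real (lg n)" unfolding lg_def by (intro powr_mono) auto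
  also have "\<dots> = real (2 ^ lg n)" by (simp add: powr_realpow)
  finally show ?thesis by linarith
qed

definition light_indices :: "('a \<Rightarrow> bool) \<Rightarrow> 'a list \<Rightarrow> nat list" where
  "light_indices H P = filter (\<lambda>j. \<not> H (P ! j)) [0..<length P]"

definition heavy_count :: "('a \<Rightarrow> bool) \<Rightarrow> 'a list \<Rightarrow> nat \<Rightarrow> nat \<Rightarrow> nat" where
  "heavy_count H P a b = length (filter (\<lambda>j. H (P ! j)) [a..<b])"

definition light_segments :: "('a \<Rightarrow> bool) \<Rightarrow> 'a list \<Rightarrow> nat list \<Rightarrow> nat \<Rightarrow> ('a \<times> nat) list" where
  "light_segments H P idx e =
     map (\<lambda>m. (P ! (idx ! m),
               heavy_count H P (Suc (idx ! m)) (if Suc m < length idx then idx ! Suc m else e)))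
         [0..<length idx]"

definition compress :: "('a \<Rightarrow> bool) \<Rightarrow> 'a list \<Rightarrow> ('a \<times> nat) list" where
  "compress H P = light_segments H P (light_indices H P) (length P - 1)"

definition incr_last :: "('a \<times> nat) list \<Rightarrow> ('a \<times> nat) list" where
  "incr_last L = butlast L @ [(fst (last L), Suc (snd (last L)))]"

definition compress_step :: "('a \<times> nat) list \<Rightarrow> bool \<Rightarrow> bool \<Rightarrow> 'a \<Rightarrow> ('a \<times> nat) list" where
  "compress_step L heavy_last heavy_new x =
     (let L' = if heavy_last then incr_last L else L in if heavy_new then L' else L' @ [(x, 0)])"

lemma heavy_count_cong:
  "(\<And>j. j < b \<Longrightarrow> P ! j = Q ! j) \<Longrightarrow> heavy_count H P a b = heavy_count H Q a b"
  unfolding heavy_count_def by (metis (no_types, lifting) atLeastLessThan_iff filter_cong set_upt)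

lemma heavy_count_Suc:
  "a \<le> b \<Longrightarrow> heavy_count H P a (Suc b) = heavy_count H P a b + of_bool (H (P ! b))"
  unfolding heavy_count_def by simp

lemma light_segments_snoc:
  "light_segments H P (idx @ [k]) e = light_segments H P idx k @ [(P ! k, heavy_count H P (Suc k) e)]"
  unfolding light_segments_def by (auto simp: nth_append intro!: map_cong)

lemma light_segments_cong:
  assumes "\<And>j. j < N \<Longrightarrow> P ! j = Q ! j" "\<forall>k\<in>set idx. k < N" "e \<le> N"
  shows "light_segments H P idx e = light_segments H Q idx e"
proof -
  have "heavy_count H P a b = heavy_count H Q a b" if "b \<le> N" for a b
    using assms(1) that by (intro heavy_count_cong) simp
  moreover have "idx ! m \<le> N" if "m < length idx" for m
    using assms(2) that by (simp add: less_imp_le)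
  ultimately show ?thesis
    unfolding light_segments_def using assms by (auto intro!: map_cong)
qed

lemma light_indices_snoc:
  "light_indices H (P @ [x]) = light_indices H P @ (if H x then [] else [length P])"
proof -
  have "filter (\<lambda>j. \<not> H ((P @ [x]) ! j)) [0..<length P] = light_indices H P"
    unfolding light_indices_def by (rule filter_cong) (auto simp: nth_append)
  then show ?thesis unfolding light_indices_def by simp
qed

lemma compress_snoc:
  assumes "P \<noteq> []" "\<not> H (hd P)"
  shows "compress H (P @ [x]) = compress_step (compress H P) (H (last P)) (H x) x"
proof -
  define n where "n = length P"
  have "0 \<in> set (light_indices H P)"
    using assms by (simp add: light_indices_def hd_conv_nth)
  then obtain idx i where idx: "light_indices H P = idx @ [i]"
    by (metis empty_iff list.set(1) rev_exhaust)
  have light: "k < n \<and> \<not> H (P ! k)" if "k \<in> set (idx @ [i])" for k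
    using that unfolding idx[symmetric] light_indices_def n_def by auto
  then have idx_below: "\<forall>k\<in>set idx. k < n" and i_below: "i < n" by auto
  have count: "heavy_count H P (Suc i) n = heavy_count H P (Suc i) (n - 1) + of_bool (H (last P))"
  proof (cases "i = n - 1")
    case True
    then show ?thesis using light[of i] assms(1) by (simp add: last_conv_nth n_def heavy_count_def)
  next
    case False
    with i_below have "Suc i \<le> n - 1" by arith
    then show ?thesis
      using heavy_count_Suc[of "Suc i" "n - 1" H P] assms(1) by (simp add: last_conv_nth n_def)
  qed
  have "compress H (P @ [x]) =
      light_segments H (P @ [x]) (idx @ [i] @ (if H x then [] else [n])) n"
    unfolding compress_def light_indices_snoc idx n_def by simp
  also have "\<dots> = light_segments H (P @ [x]) idx i @
      [((P @ [x]) ! i, heavy_count H (P @ [x]) (Suc i) n)] @ (if H x then [] else [(x, 0)])"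
    by (cases "H x")
      (simp_all add: light_segments_snoc light_segments_snoc[where idx = "idx @ [i]", simplified]
        heavy_count_def n_def)
  also have "\<dots> = light_segments H P idx i @
      [(P ! i, heavy_count H P (Suc i) n)] @ (if H x then [] else [(x, 0)])"
    using idx_below i_below light_segments_cong[of n "P @ [x]" P idx i H]
      heavy_count_cong[of n "P @ [x]" P H]
    by (simp add: nth_append n_def)
  moreover have "compress H P = light_segments H P idx i @ [(P ! i, heavy_count H P (Suc i) (n - 1))]"
    unfolding compress_def idx light_segments_snoc n_def ..
  ultimately show ?thesis
    using count unfolding compress_step_def incr_last_def by (auto simp: Let_def)
qed

lemma compress_step_length:
  "L \<noteq> [] \<Longrightarrow> length (compress_step L hp hx x) = length L + of_bool (\<not> hx)"
  unfolding compress_step_def incr_last_def by (auto simp: Let_def)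

lemma compress_step_nonempty: "L \<noteq> [] \<Longrightarrow> compress_step L hp hx x \<noteq> []"
  unfolding compress_step_def incr_last_def by (auto simp: Let_def)

lemma compress_step_entries:
  assumes "L \<noteq> []" "e \<in> set (compress_step L hp hx x)"
  shows "e = (x, 0) \<or> (\<exists>e'\<in>set L. fst e = fst e' \<and> snd e \<le> Suc (snd e'))"
proof -
  have "e \<in> set (if hp then incr_last L else L) \<or> e = (x, 0)"
    using assms(2) unfolding compress_step_def by (auto simp: Let_def split: if_splits)
  moreover have "\<exists>e'\<in>set L. fst e = fst e' \<and> snd e \<le> Suc (snd e')" if "e \<in> set (incr_last L)"
    using that assms(1) unfolding incr_last_def
    by (auto dest: in_set_butlastD intro: bexI[of _ "last L"])
  ultimately show ?thesis by (auto split: if_splits)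
qed

definition heaviest :: "'a::wellorder set \<Rightarrow> ('a \<Rightarrow> nat) \<Rightarrow> 'a" where
  "heaviest C f = (LEAST c. c \<in> C \<and> (\<forall>c'\<in>C. f c' \<le> f c))"

lemma heaviest:
  assumes "finite C" "C \<noteq> {}"
  shows "heaviest C f \<in> C" "\<forall>c\<in>C. f c \<le> f (heaviest C f)"
proof -
  have "Max (f ` C) \<in> f ` C" using assms by simp
  then obtain m where "m \<in> C" "f m = Max (f ` C)" by (metis imageE)
  then have "m \<in> C \<and> (\<forall>c'\<in>C. f c' \<le> f m)" using assms by auto
  then have "heaviest C f \<in> C \<and> (\<forall>c'\<in>C. f c' \<le> f (heaviest C f))"
    unfolding heaviest_def by (rule LeastI)
  then show "heaviest C f \<in> C" "\<forall>c\<in>C. f c \<le> f (heaviest C f)" by auto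
qed

lemma heaviest_cong: "(\<And>c. c \<in> C \<Longrightarrow> f c = g c) \<Longrightarrow> heaviest C f = heaviest C g"
  unfolding heaviest_def by (metis (no_types, lifting))

lemma compressed_path_eq_compress:
  "compressed_path par s hc v = compress (is_heavy par s hc) (root_path par s v)"
  unfolding compressed_path_def compress_def light_segments_def light_indices_def
    heavy_count_def root_path_def
  by (simp add: Let_def)

section \<open>Depth and subtrees in rooted trees\<close>

locale parent_tree =
  fixes VT :: "nat set" and s :: nat and par :: "nat \<Rightarrow> nat option"
  assumes finite_VT: "finite VT" and root_in: "s \<in> VT" and par_root: "par s = None"
    and parent_in: "v \<in> VT \<Longrightarrow> v \<noteq> s \<Longrightarrow> \<exists>p\<in>VT. par v = Some p"
    and reaches_root: "v \<in> VT \<Longrightarrow> \<exists>k. up par k v = s"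
begin

abbreviation "dep \<equiv> depth par s"
abbreviation "ch \<equiv> children VT par"
abbreviation "subtree v \<equiv> {w \<in> VT. anc_eq par s v w}"
abbreviation "sz \<equiv> subtree_size VT par s"

lemma up_0 [simp]: "up par 0 v = v"
  unfolding up_def by simp

lemma up_Suc: "up par (Suc k) v = the (par (up par k v))"
  unfolding up_def by simp

lemma up_Suc_right: "up par (Suc k) v = up par k (the (par v))"
  unfolding up_def by (simp only: funpow_Suc_right comp_def)

lemma up_depth: "v \<in> VT \<Longrightarrow> up par (dep v) v = s"
  unfolding depth_def using reaches_root by (rule LeastI_ex)

lemma up_below_depth: "k < dep v \<Longrightarrow> up par k v \<noteq> s"
  unfolding depth_def using not_less_Least by blast

lemma depth_le: "up par k v = s \<Longrightarrow> dep v \<le> k"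
  unfolding depth_def by (rule Least_le)

lemma depth_root [simp]: "dep s = 0"
  using depth_le[of 0 s] by simp

lemma depth_eq_0: "v \<in> VT \<Longrightarrow> dep v = 0 \<Longrightarrow> v = s"
  using up_depth by fastforce

lemma children_iff: "c \<in> ch v \<longleftrightarrow> c \<in> VT \<and> par c = Some v"
  unfolding children_def by simp

lemma finite_children: "finite (ch v)"
  using finite_VT unfolding children_def by simp

lemma child_in_tree: "c \<in> VT \<Longrightarrow> par c = Some v \<Longrightarrow> c \<noteq> s \<and> v \<in> VT"
  using parent_in par_root by (cases "c = s") force+

lemma depth_child:
  assumes "c \<in> VT" "par c = Some v"
  shows "dep c = Suc (dep v)"
proof -
  have "c \<noteq> s" "v \<in> VT" using child_in_tree assms by auto
  have "up par (Suc (dep v)) c = s" using up_Suc_right assms up_depth \<open>v \<in> VT\<close> by simp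
  then have "dep c \<le> Suc (dep v)" by (rule depth_le)
  moreover obtain m where m: "dep c = Suc m"
    using up_depth[OF assms(1)] \<open>c \<noteq> s\<close> by (cases "dep c") auto
  then have "up par m v = s" using up_depth[OF assms(1)] up_Suc_right assms by simp
  then have "dep v \<le> m" by (rule depth_le)
  ultimately show ?thesis using m by simp
qed

lemma tree_induct [consumes 1, case_names root child]:
  assumes "v \<in> VT" "P s"
    and "\<And>v p. v \<in> VT \<Longrightarrow> par v = Some p \<Longrightarrow> p \<in> VT \<Longrightarrow> P p \<Longrightarrow> P v"
  shows "P v"
  using assms(1)
proof (induction "dep v" arbitrary: v)
  case 0
  then have "v = s" using depth_eq_0 by metis
  then show ?case using assms(2) by simp
next
  case (Suc m)
  then have "v \<noteq> s" by (metis depth_root nat.distinct(1))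
  then obtain p where p: "p \<in> VT" "par v = Some p" using parent_in Suc.prems by blast
  then have "dep p = m" using depth_child Suc by fastforce
  then show ?case using Suc p assms(3) by blast
qed

lemma up_in_tree: "v \<in> VT \<Longrightarrow> k \<le> dep v \<Longrightarrow> up par k v \<in> VT"
proof (induction k)
  case (Suc k)
  then have "up par k v \<in> VT" "up par k v \<noteq> s" using up_below_depth by auto
  then show ?case using parent_in by (fastforce simp: up_Suc)
qed simp

lemma depth_up: "v \<in> VT \<Longrightarrow> k \<le> dep v \<Longrightarrow> dep (up par k v) = dep v - k"
proof (induction k)
  case (Suc k)
  then have "up par k v \<in> VT" "up par k v \<noteq> s" using up_below_depth up_in_tree by auto
  then obtain p where "par (up par k v) = Some p" "p \<in> VT" using parent_in by blast
  then show ?case using Suc depth_child \<open>up par k v \<in> VT\<close> by (simp add: up_Suc)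
qed simp

lemma parent_not_child: "c \<in> ch v \<Longrightarrow> par v \<noteq> Some c"
proof
  assume "c \<in> ch v" "par v = Some c"
  then have c: "c \<in> VT" "par c = Some v" by (auto simp: children_iff)
  then have "v \<in> VT" using child_in_tree by blast
  show False using depth_child[OF c] depth_child[OF \<open>v \<in> VT\<close> \<open>par v = Some c\<close>] by simp
qed

lemma length_root_path: "length (root_path par s v) = Suc (dep v)"
  unfolding root_path_def by simp

lemma root_path_root: "root_path par s s = [s]"
  unfolding root_path_def by simp

lemma hd_root_path: "v \<in> VT \<Longrightarrow> hd (root_path par s v) = s"
  unfolding root_path_def using up_depth by (simp add: hd_map del: upt_Suc)

lemma last_root_path: "last (root_path par s v) = v"
  unfolding root_path_def by (simp add: last_map)

lemma root_path_child:
  assumes "c \<in> VT" "par c = Some v"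
  shows "root_path par s c = root_path par s v @ [c]"
proof -
  have d: "dep c = Suc (dep v)" using depth_child assms by blast
  have "root_path par s c = map (\<lambda>i. up par (dep c - i) c) [0..<Suc (dep v)] @ [c]"
    unfolding root_path_def d by simp
  also have "map (\<lambda>i. up par (dep c - i) c) [0..<Suc (dep v)] = root_path par s v"
    unfolding root_path_def
  proof (rule map_cong[OF refl])
    fix i assume "i \<in> set [0..<Suc (dep v)]"
    then have "dep c - i = Suc (dep v - i)" using d by auto
    then show "up par (dep c - i) c = up par (dep v - i) v" using up_Suc_right assms by simp
  qed
  finally show ?thesis .
qed

lemma subtree_self: "v \<in> VT \<Longrightarrow> v \<in> subtree v"
  unfolding anc_eq_def by (auto intro: exI[of _ 0])

lemma subtree_root: "subtree s = VT"
  unfolding anc_eq_def using up_depth by blast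

lemma in_subtreeE:
  assumes "w \<in> subtree v"
  obtains k where "k \<le> dep w" "up par k w = v" "dep v = dep w - k"
  using assms depth_up unfolding anc_eq_def by blast

lemma subtree_child_subset:
  assumes "c \<in> ch v"
  shows "subtree c \<subseteq> subtree v"
proof
  fix w assume w: "w \<in> subtree c"
  then obtain k where k: "k \<le> dep w" "up par k w = c" "dep c = dep w - k"
    by (rule in_subtreeE)
  have c: "c \<in> VT" "par c = Some v" using assms by (auto simp: children_iff)
  then have "Suc k \<le> dep w" using depth_child k by simp
  moreover have "up par (Suc k) w = v" using k c by (simp add: up_Suc)
  ultimately show "w \<in> subtree v" using w unfolding anc_eq_def by blast
qed

lemma not_in_subtree_child: "c \<in> ch v \<Longrightarrow> v \<notin> subtree c"
proof
  assume "c \<in> ch v" "v \<in> subtree c"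
  obtain k where "dep c = dep v - k" using \<open>v \<in> subtree c\<close> by (rule in_subtreeE)
  moreover have "dep c = Suc (dep v)" using \<open>c \<in> ch v\<close> depth_child by (simp add: children_iff)
  ultimately show False by simp
qed

lemma in_subtree_child:
  assumes "w \<in> subtree v" "w \<noteq> v"
  shows "\<exists>c\<in>ch v. w \<in> subtree c"
proof -
  obtain k where w: "w \<in> VT" "k \<le> dep w" "up par k w = v"
    using assms unfolding anc_eq_def by auto
  obtain j where j: "k = Suc j" using w(3) assms(2) by (cases k) auto
  define c where "c = up par j w"
  have "c \<in> VT" "c \<noteq> s" using up_in_tree up_below_depth w j c_def by auto
  then obtain p where "par c = Some p" using parent_in by blast
  then have "c \<in> ch v" using w j c_def \<open>c \<in> VT\<close> by (simp add: children_iff up_Suc)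
  moreover have "j \<le> dep w" using w j by simp
  then have "w \<in> subtree c" using w unfolding anc_eq_def c_def by blast
  ultimately show ?thesis by blast
qed

lemma subtree_children_disjoint:
  assumes "c \<in> ch v" "c' \<in> ch v" "w \<in> subtree c" "w \<in> subtree c'"
  shows "c = c'"
proof -
  obtain i where i: "i \<le> dep w" "up par i w = c" "dep c = dep w - i"
    using assms(3) by (rule in_subtreeE)
  obtain j where j: "j \<le> dep w" "up par j w = c'" "dep c' = dep w - j"
    using assms(4) by (rule in_subtreeE)
  have "dep c = dep c'" using depth_child assms(1,2) by (simp add: children_iff)
  then have "i = j" using i j by simp
  then show ?thesis using i j by simp
qed

lemma subtree_decomp:
  assumes "v \<in> VT"
  shows "subtree v = insert v (\<Union>c\<in>ch v. subtree c)"
proof (intro set_eqI iffI)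
  fix w assume "w \<in> subtree v"
  then show "w \<in> insert v (\<Union>c\<in>ch v. subtree c)"
    using in_subtree_child[of w v] by (cases "w = v") auto
next
  fix w assume "w \<in> insert v (\<Union>c\<in>ch v. subtree c)"
  then show "w \<in> subtree v" using subtree_self[OF assms] subtree_child_subset[of _ v] by auto
qed

lemma subtree_size_rec: "v \<in> VT \<Longrightarrow> sz v = Suc (\<Sum>c\<in>ch v. sz c)"
proof -
  assume v: "v \<in> VT"
  have "sz v = card (insert v (\<Union>c\<in>ch v. subtree c))"
    unfolding subtree_size_def using subtree_decomp[OF v] by simp
  also have "\<dots> = Suc (card (\<Union>c\<in>ch v. subtree c))"
    using not_in_subtree_child finite_VT finite_children by (subst card_insert_disjoint) auto
  also have "card (\<Union>c\<in>ch v. subtree c) = (\<Sum>c\<in>ch v. card (subtree c))"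
    using finite_VT finite_children subtree_children_disjoint by (intro card_UN_disjoint) auto
  finally show ?thesis unfolding subtree_size_def by simp
qed

lemma subtree_size_root: "sz s = card VT"
  unfolding subtree_size_def subtree_root ..

lemma subtree_size_pos: "v \<in> VT \<Longrightarrow> 0 < sz v"
  using subtree_size_rec by simp

lemma subtree_size_le: "sz v \<le> card VT"
  unfolding subtree_size_def by (rule card_mono[OF finite_VT]) blast

lemma subtree_size_child_less:
  assumes "c \<in> ch v"
  shows "sz c < sz v"
proof -
  have "v \<in> VT" using assms child_in_tree by (auto simp: children_iff)
  have "sz c \<le> (\<Sum>c\<in>ch v. sz c)" using assms finite_children by (intro member_le_sum) auto
  then show ?thesis using subtree_size_rec[OF \<open>v \<in> VT\<close>] by simp
qed

lemma subtree_induct [consumes 1, case_names children]: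
  assumes "v \<in> VT" "\<And>v. v \<in> VT \<Longrightarrow> (\<And>c. c \<in> ch v \<Longrightarrow> P c) \<Longrightarrow> P v"
  shows "P v"
  using assms(1)
proof (induction "sz v" arbitrary: v rule: less_induct)
  case less
  show ?case
  proof (rule assms(2)[OF less.prems])
    fix c assume "c \<in> ch v"
    then show "P c" using less.hyps subtree_size_child_less by (simp add: children_iff)
  qed
qed

lemma depth_plus_subtree_size: "v \<in> VT \<Longrightarrow> dep v + sz v \<le> card VT"
proof (induction rule: tree_induct)
  case root
  then show ?case using subtree_size_root by simp
next
  case (child v p)
  then show ?case
    using depth_child subtree_size_child_less[of v p] by (fastforce simp: children_iff)
qed

lemma depth_le_tdiam:
  assumes "v \<in> VT"
  shows "dep v \<le> tdiam VT par s"
proof -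
  have "{w \<in> VT. anc_eq par s w s \<and> anc_eq par s w v} = {s}"
    using assms root_in up_depth unfolding anc_eq_def by auto
  then have dist: "tdist VT par s s v = dep v"
    unfolding tdist_def by (simp add: setcompr_eq_image)
  have "{tdist VT par s u v | u v. u \<in> VT \<and> v \<in> VT} =
      (\<lambda>(u, v). tdist VT par s u v) ` (VT \<times> VT)"
    by auto
  then have "finite {tdist VT par s u v | u v. u \<in> VT \<and> v \<in> VT}"
    using finite_VT by simp
  moreover have "tdist VT par s s v \<in> {tdist VT par s u v | u v. u \<in> VT \<and> v \<in> VT}"
    using root_in assms by blast
  ultimately show ?thesis
    unfolding tdiam_def dist[symmetric] by (rule Max_ge)
qed


section \<open>Heavy children and compressed paths\<close>

definition heavy_child :: "nat \<Rightarrow> nat" where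
  "heavy_child v = heaviest (ch v) sz"

abbreviation "heavy \<equiv> is_heavy par s heavy_child"
abbreviation "cpath \<equiv> compressed_path par s heavy_child"

lemma heavy_child:
  assumes "ch v \<noteq> {}"
  shows "heavy_child v \<in> ch v" "\<forall>c\<in>ch v. sz c \<le> sz (heavy_child v)"
  unfolding heavy_child_def using heaviest[OF finite_children assms] by auto

lemma heavy_choice_heavy_child: "heavy_choice VT par s heavy_child"
  unfolding heavy_choice_def using heavy_child by simp

lemma heavy_iff: "c \<in> ch v \<Longrightarrow> heavy c \<longleftrightarrow> heavy_child v = c"
  unfolding is_heavy_def using child_in_tree by (auto simp: children_iff)

lemma not_heavy_root: "\<not> heavy s"
  unfolding is_heavy_def by simp

lemma light_child_size:
  assumes "c \<in> ch v" "heavy_child v \<noteq> c"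
  shows "2 * sz c \<le> sz v"
proof -
  have v: "v \<in> VT" using assms(1) child_in_tree by (auto simp: children_iff)
  have h: "heavy_child v \<in> ch v" "sz c \<le> sz (heavy_child v)" using heavy_child assms(1) by auto
  have "sz c + sz (heavy_child v) = (\<Sum>x\<in>{c, heavy_child v}. sz x)" using assms(2) by simp
  also have "\<dots> \<le> (\<Sum>x\<in>ch v. sz x)" using h assms finite_children by (intro sum_mono2) auto
  finally show ?thesis using subtree_size_rec[OF v] h by simp
qed

lemma cpath_root: "cpath s = [(s, 0)]"
  unfolding compressed_path_eq_compress root_path_root compress_def light_segments_def
    light_indices_def heavy_count_def
  using not_heavy_root by simp

lemma cpath_child:
  assumes "c \<in> VT" "par c = Some v"
  shows "cpath c = compress_step (cpath v) (heavy v) (heavy c) c"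
proof -
  have "v \<in> VT" using child_in_tree assms by blast
  then have "root_path par s v \<noteq> []" "\<not> heavy (hd (root_path par s v))"
    using length_root_path[of v] hd_root_path not_heavy_root by auto
  then show ?thesis
    unfolding compressed_path_eq_compress root_path_child[OF assms]
    by (simp add: compress_snoc last_root_path)
qed

lemma cpath_nonempty: "v \<in> VT \<Longrightarrow> cpath v \<noteq> []"
  by (induction rule: tree_induct) (simp_all add: cpath_root cpath_child compress_step_nonempty)

lemma cpath_entries: "v \<in> VT \<Longrightarrow> e \<in> set (cpath v) \<Longrightarrow> fst e \<in> VT \<and> snd e \<le> dep v"
proof (induction arbitrary: e rule: tree_induct)
  case root
  then show ?case using cpath_root root_in by simp
next
  case (child v p)
  have "e = (v, 0) \<or> (\<exists>e'\<in>set (cpath p). fst e = fst e' \<and> snd e \<le> Suc (snd e'))"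
    using compress_step_entries[OF cpath_nonempty[OF child(3)]] child.prems
    unfolding cpath_child[OF child(1,2)] by blast
  then show ?case using child.IH child(1) depth_child[OF child(1,2)] by force
qed

text \<open>Every light vertex on the path at least halves the subtree size.\<close>
lemma cpath_length_subtree_size: "v \<in> VT \<Longrightarrow> 2 ^ length (cpath v) * sz v \<le> 2 * card VT"
proof (induction rule: tree_induct)
  case root
  then show ?case using cpath_root subtree_size_root by simp
next
  case (child v p)
  then have vp: "v \<in> ch p" by (simp add: children_iff)
  have "length (cpath v) = length (cpath p) + of_bool (heavy_child p \<noteq> v)"
    using cpath_child[OF child(1,2)] cpath_nonempty[OF child(3)] heavy_iff[OF vp]
    by (simp add: compress_step_length)
  then have "2 ^ length (cpath v) * sz v \<le> 2 ^ length (cpath p) * sz p"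
    using subtree_size_child_less[OF vp] light_child_size[OF vp]
    by (cases "heavy_child p = v") simp_all
  then show ?case using child(4) by linarith
qed

end

lemma filter_upt_interval: "filter (\<lambda>i. a \<le> i \<and> i < b) [0..<t] = [a..<min t b]"
proof (induction t)
  case (Suc t)
  then show ?case by (cases "t < b") (auto simp: min_def)
qed simp

section \<open>The algorithm\<close>

type_synonym inbox = "(nat \<Rightarrow> msg option) list"

definition heard :: "inbox \<Rightarrow> nat \<Rightarrow> bool" where
  "heard h c \<longleftrightarrow> (\<exists>i<length h. (h ! i) c \<noteq> None)"

definition first_heard :: "inbox \<Rightarrow> nat \<Rightarrow> nat" where
  "first_heard h c = (LEAST i. i < length h \<and> (h ! i) c \<noteq> None)"

definition heard_all :: "nat set \<Rightarrow> inbox \<Rightarrow> bool" where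
  "heard_all C h \<longleftrightarrow> (\<forall>c\<in>C. heard h c)"

definition all_heard_round :: "nat set \<Rightarrow> inbox \<Rightarrow> nat" where
  "all_heard_round C h = (if C = {} then 0 else Suc (Max (first_heard h ` C)))"

definition reported_size :: "inbox \<Rightarrow> nat \<Rightarrow> nat" where
  "reported_size h c = nat_of_bits (the ((h ! first_heard h c) c))"

definition msgs_from :: "inbox \<Rightarrow> nat \<Rightarrow> msg list" where
  "msgs_from h p = map (\<lambda>f. the (f p)) (filter (\<lambda>f. f p \<noteq> None) h)"

text \<open>\<open>heavy_flag\<close> tells the receiving child whether it is heavy.\<close>
definition encode_entry :: "nat \<Rightarrow> nat \<Rightarrow> bool \<Rightarrow> bool \<Rightarrow> nat \<times> nat \<Rightarrow> msg" where
  "encode_entry W L last_flag heavy_flag e =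
     last_flag # heavy_flag # bits_of_nat W (fst e) @ bits_of_nat L (snd e)"

definition decode_entry :: "nat \<Rightarrow> msg \<Rightarrow> nat \<times> nat" where
  "decode_entry W m = (nat_of_bits (take W (drop 2 m)), nat_of_bits (drop (2 + W) m))"

definition path_received :: "nat option \<Rightarrow> nat set \<Rightarrow> inbox \<Rightarrow> bool" where
  "path_received pr C h = (case pr of
      None \<Rightarrow> heard_all C h
    | Some p \<Rightarrow> (\<exists>m\<in>set (msgs_from h p). hd m))"

definition forward_start :: "nat option \<Rightarrow> nat set \<Rightarrow> inbox \<Rightarrow> nat" where
  "forward_start pr C h = (case pr of
      None \<Rightarrow> all_heard_round C h
    | Some p \<Rightarrow> Suc (LEAST i. i < length h \<and> (h ! i) p \<noteq> None \<and> hd (the ((h ! i) p))))"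

definition received_path :: "nat \<Rightarrow> nat \<Rightarrow> nat option \<Rightarrow> inbox \<Rightarrow> (nat \<times> nat) list" where
  "received_path W me pr h = (case pr of
      None \<Rightarrow> [(me, 0)]
    | Some p \<Rightarrow> map (decode_entry W) (msgs_from h p))"

definition received_heavy :: "nat option \<Rightarrow> inbox \<Rightarrow> bool" where
  "received_heavy pr h = (case pr of None \<Rightarrow> False | Some p \<Rightarrow> hd (tl (hd (msgs_from h p))))"

definition heavy_light_msg :: "nat \<Rightarrow> state \<Rightarrow> nat \<Rightarrow> msg option" where
  "heavy_light_msg b st w = (case st of ((me, n, nb, inT, pr, C), h) \<Rightarrow>
    (let L = lg n; W = b * L; t = length h in
     if \<not> inT then None
     else if pr = Some w then
       (if heard_all C h \<and> all_heard_round C h = t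
        then Some (bits_of_nat L (Suc (\<Sum>c\<in>C. reported_size h c))) else None)
     else if w \<in> C then
       (let S = forward_start pr C h; hw = (w = heaviest C (reported_size h));
            P = compress_step (received_path W me pr h) (received_heavy pr h) hw w; j = t - S in
        if path_received pr C h \<and> heard_all C h \<and> S \<le> t \<and> j < length P
        then Some (encode_entry W L (Suc j = length P) hw (P ! j)) else None)
     else None))"

definition heavy_light_out :: "nat \<Rightarrow> state \<Rightarrow> outp" where
  "heavy_light_out b st = (case st of ((me, n, nb, inT, pr, C), h) \<Rightarrow>
     (received_heavy pr h, received_path (b * lg n) me pr h))"

definition heavy_light_alg :: "nat \<Rightarrow> alg" where
  "heavy_light_alg b = \<lparr>amsg = heavy_light_msg b, aout = heavy_light_out b\<rparr>"

lemma run_eq: "run A I E t v = (I v, map (\<lambda>i u. sent A I E i u v) [0..<t])"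
  by (induction t) (auto simp: sent_def)

lemma decode_encode_entry:
  "fst e < 2 ^ W \<Longrightarrow> snd e < 2 ^ L \<Longrightarrow> decode_entry W (encode_entry W L lf hf e) = e"
  unfolding decode_entry_def encode_entry_def by (cases e) (simp add: nat_of_bits_of_nat)

lemma length_encode_entry: "length (encode_entry W L lf hf e) = 2 + W + L"
  unfolding encode_entry_def by simp

locale tree_network =
  fixes V :: "nat set" and E :: "nat \<Rightarrow> nat \<Rightarrow> bool" and VT :: "nat set" and s :: nat
    and par :: "nat \<Rightarrow> nat option" and b n :: nat
  assumes finite_V: "finite V" and card_V: "card V = n" and ids_bounded: "\<forall>v\<in>V. v < n ^ b"
    and edges: "\<forall>u v. E u v \<longrightarrow> u \<in> V \<and> v \<in> V \<and> u \<noteq> v \<and> E v u"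
    and tree: "rooted_tree_in V E VT s par"

sublocale tree_network \<subseteq> parent_tree VT s par
proof
  show "finite VT"
    using tree finite_V finite_subset unfolding rooted_tree_in_def by blast
qed (use tree in \<open>auto simp: rooted_tree_in_def\<close>)

context tree_network
begin

abbreviation "L \<equiv> lg n"
abbreviation "W \<equiv> b * lg n"
abbreviation "D \<equiv> tdiam VT par s"
abbreviation "I \<equiv> local_input n E VT par"
abbreviation "A \<equiv> heavy_light_alg b"
abbreviation "snt t u v \<equiv> sent A I E t u v"
abbreviation "inbox v t \<equiv> map (\<lambda>i u. snt i u v) [0..<t]"

lemma tree_edge:
  assumes "c \<in> VT" "par c = Some v"
  shows "E v c \<and> E c v"
proof -
  have "c \<in> VT - {s}" using child_in_tree assms by blast
  then obtain u where "par c = Some u" "E u c" using tree unfolding rooted_tree_in_def by blast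
  then show ?thesis using assms(2) edges by auto
qed

lemma sent_eq: "snt t u v = (if E u v then heavy_light_msg b (I u, inbox u t) v else None)"
proof -
  have "snt t u v = (if E u v then amsg A (run A I E t u) v else None)" by (rule sent_def)
  then show ?thesis by (simp add: run_eq heavy_light_alg_def)
qed

lemma heavy_light_msg_outside: "u \<notin> VT \<Longrightarrow> heavy_light_msg b (I u, h) w = None"
  by (simp add: heavy_light_msg_def local_input_def)

lemma heavy_light_msg_to_parent:
  "u \<in> VT \<Longrightarrow> par u = Some w \<Longrightarrow> heavy_light_msg b (I u, h) w =
    (if heard_all (ch u) h \<and> all_heard_round (ch u) h = length h
     then Some (bits_of_nat L (Suc (\<Sum>c\<in>ch u. reported_size h c))) else None)"
  by (simp add: heavy_light_msg_def local_input_def)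

lemma heavy_light_msg_to_child:
  "u \<in> VT \<Longrightarrow> w \<in> ch u \<Longrightarrow> heavy_light_msg b (I u, h) w =
    (let S = forward_start (par u) (ch u) h; hw = (w = heaviest (ch u) (reported_size h));
         P = compress_step (received_path W u (par u) h) (received_heavy (par u) h) hw w;
         j = length h - S in
     if path_received (par u) (ch u) h \<and> heard_all (ch u) h \<and> S \<le> length h \<and> j < length P
     then Some (encode_entry W L (Suc j = length P) hw (P ! j)) else None)"
  using parent_not_child by (simp add: heavy_light_msg_def local_input_def Let_def)

lemma heavy_light_msg_other:
  "par u \<noteq> Some w \<Longrightarrow> w \<notin> ch u \<Longrightarrow> heavy_light_msg b (I u, h) w = None"
  by (simp add: heavy_light_msg_def local_input_def)

lemma sent_cases:
  assumes "snt t u v \<noteq> None"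
  shows "u \<in> VT \<and> (par u = Some v \<or> v \<in> ch u)"
proof -
  have "heavy_light_msg b (I u, inbox u t) v \<noteq> None" using assms by (simp add: sent_eq split: if_splits)
  then show ?thesis by (metis heavy_light_msg_outside heavy_light_msg_other)
qed

lemma card_VT_le: "card VT \<le> n"
  using card_V card_mono[OF finite_V] tree unfolding rooted_tree_in_def by blast

lemma subtree_size_bits: "sz v < 2 ^ L"
  using subtree_size_le[of v] card_VT_le lg_bound[of n] by linarith

lemma vertex_bits:
  assumes "v \<in> VT"
  shows "v < 2 ^ W"
proof -
  have "v < n ^ b" using ids_bounded assms tree unfolding rooted_tree_in_def by blast
  also have "n ^ b \<le> (2 ^ L) ^ b" using lg_bound[of n] by (intro power_mono) auto
  also have "\<dots> = 2 ^ W" by (metis power_mult mult.commute)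
  finally show ?thesis .
qed

lemma cpath_length_le: "v \<in> VT \<Longrightarrow> length (cpath v) \<le> L"
proof -
  assume v: "v \<in> VT"
  have "(2::nat) ^ length (cpath v) \<le> 2 ^ length (cpath v) * sz v"
    using subtree_size_pos[OF v] by simp
  also have "\<dots> \<le> 2 * card VT" using cpath_length_subtree_size[OF v] .
  also have "\<dots> < 2 ^ Suc L" using card_VT_le lg_bound[of n] by simp
  finally have "length (cpath v) < Suc L" by (rule power_less_imp_less_exp[rotated]) simp
  then show ?thesis by simp
qed

lemma cpath_entry_bits:
  assumes "v \<in> VT" "e \<in> set (cpath v)"
  shows "fst e < 2 ^ W" "snd e < 2 ^ L"
proof -
  show "fst e < 2 ^ W" using cpath_entries vertex_bits assms by blast
  have "snd e + sz v \<le> card VT"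
    using cpath_entries[OF assms] depth_plus_subtree_size[OF assms(1)] by simp
  then show "snd e < 2 ^ L"
    using subtree_size_pos[OF assms(1)] card_VT_le lg_bound[of n] by linarith
qed

section \<open>Convergecast of subtree sizes\<close>

lemma heard_inbox: "heard (inbox v t) c \<longleftrightarrow> (\<exists>i<t. snt i c v \<noteq> None)"
  unfolding heard_def by auto

lemma first_heard_inbox:
  assumes "\<And>i. snt i c v = (if i = g then Some m else None)" "g < t"
  shows "first_heard (inbox v t) c = g"
  unfolding first_heard_def using assms by (intro Least_equality) (auto split: if_splits)

lemma reported_size_inbox:
  assumes "\<And>i. snt i c v = (if i = g then Some m else None)" "g < t"
  shows "reported_size (inbox v t) c = nat_of_bits m"
  unfolding reported_size_def first_heard_inbox[OF assms] using assms by simp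

lemma msgs_from_inbox:
  "msgs_from (inbox v t) p = map (\<lambda>i. the (snt i p v)) (filter (\<lambda>i. snt i p v \<noteq> None) [0..<t])"
  unfolding msgs_from_def by (simp add: filter_map o_def)

text \<open>\<open>r\<close> is the round in which \<open>v\<close> has heard from all its children and reports its
own subtree size to its parent.\<close>
definition convergecast_at :: "nat \<Rightarrow> nat \<Rightarrow> bool" where
  "convergecast_at v r \<longleftrightarrow> r + dep v \<le> D \<and> (\<forall>t. heard_all (ch v) (inbox v t) \<longleftrightarrow> r \<le> t) \<and>
     (\<forall>t\<ge>r. all_heard_round (ch v) (inbox v t) = r \<and> (\<forall>c\<in>ch v. reported_size (inbox v t) c = sz c))"

lemma sent_to_parent_at:
  assumes "v \<in> VT" "par v = Some p" "convergecast_at v r"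
  shows "snt t v p = (if t = r then Some (bits_of_nat L (sz v)) else None)"
proof -
  have "E v p" using tree_edge assms(1,2) by blast
  moreover have "Suc (\<Sum>c\<in>ch v. reported_size (inbox v r) c) = sz v"
    using assms(3) subtree_size_rec[OF assms(1)] unfolding convergecast_at_def by simp
  moreover have "heard_all (ch v) (inbox v t) \<and> all_heard_round (ch v) (inbox v t) = t \<longleftrightarrow> t = r"
    using assms(3) unfolding convergecast_at_def by auto
  ultimately show ?thesis using assms by (simp add: sent_eq heavy_light_msg_to_parent)
qed

lemma convergecast_at_parent:
  assumes v: "v \<in> VT" and children: "\<forall>c\<in>ch v. convergecast_at c (g c)"
  defines "r \<equiv> if ch v = {} then 0 else Suc (Max (g ` ch v))"
  shows "convergecast_at v r"
proof -
  have sent_c: "snt i c v = (if i = g c then Some (bits_of_nat L (sz c)) else None)"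
    if "c \<in> ch v" for c i
    using sent_to_parent_at children that by (auto simp: children_iff)
  have after: "r \<le> t \<longleftrightarrow> (\<forall>c\<in>ch v. g c < t)" for t
    unfolding r_def using finite_children by (auto simp: Suc_le_eq)
  have "heard_all (ch v) (inbox v t) \<longleftrightarrow> r \<le> t" for t
    unfolding heard_all_def heard_inbox after using sent_c by auto
  moreover have "r + dep v \<le> D"
  proof (cases "ch v = {}")
    case True
    then show ?thesis using depth_le_tdiam v r_def by simp
  next
    case False
    then obtain c where c: "c \<in> ch v" "g c = Max (g ` ch v)"
      using Max_in[of "g ` ch v"] finite_children by (metis empty_is_image finite_imageI imageE)
    then have "dep c = Suc (dep v)" using depth_child by (simp add: children_iff)
    then show ?thesis using children c False r_def unfolding convergecast_at_def by auto
  qed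
  moreover have "all_heard_round (ch v) (inbox v t) = r"
    and "\<forall>c\<in>ch v. reported_size (inbox v t) c = sz c" if "r \<le> t" for t
  proof -
    have "first_heard (inbox v t) c = g c" "reported_size (inbox v t) c = sz c" if "c \<in> ch v" for c
      using first_heard_inbox reported_size_inbox sent_c[OF that] after \<open>r \<le> t\<close> that
        nat_of_bits_of_nat subtree_size_bits by auto
    then show "all_heard_round (ch v) (inbox v t) = r"
      and "\<forall>c\<in>ch v. reported_size (inbox v t) c = sz c"
      unfolding all_heard_round_def r_def by (auto cong: image_cong)
  qed
  ultimately show ?thesis unfolding convergecast_at_def by blast
qed

lemma convergecast_exists: "v \<in> VT \<Longrightarrow> \<exists>r. convergecast_at v r"
proof (induction rule: subtree_induct)
  case (children v)
  then obtain g where "\<forall>c\<in>ch v. convergecast_at c (g c)" by metis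
  then show ?case using convergecast_at_parent children.hyps by blast
qed

definition report_round :: "nat \<Rightarrow> nat" where
  "report_round v = (SOME r. convergecast_at v r)"

lemma convergecast_at_report_round: "v \<in> VT \<Longrightarrow> convergecast_at v (report_round v)"
  unfolding report_round_def using convergecast_exists by (rule someI_ex)

lemma report_round_depth: "v \<in> VT \<Longrightarrow> report_round v + dep v \<le> D"
  using convergecast_at_report_round unfolding convergecast_at_def by blast

lemma sent_to_parent:
  "v \<in> VT \<Longrightarrow> par v = Some p \<Longrightarrow>
    snt t v p = (if t = report_round v then Some (bits_of_nat L (sz v)) else None)"
  using sent_to_parent_at convergecast_at_report_round by blast

lemma report_round_child_less:
  assumes "c \<in> ch v"
  shows "report_round c < report_round v"
proof -
  have c: "c \<in> VT" "par c = Some v" and "v \<in> VT"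
    using assms child_in_tree by (auto simp: children_iff)
  then have "heard_all (ch v) (inbox v (report_round v))"
    using convergecast_at_report_round unfolding convergecast_at_def by blast
  then obtain i where "i < report_round v" "snt i c v \<noteq> None"
    using assms unfolding heard_all_def heard_inbox by blast
  then show ?thesis using sent_to_parent[OF c, of i] by (simp split: if_splits)
qed

section \<open>Pipelined downcast of compressed paths\<close>

definition path_msg :: "nat \<Rightarrow> nat \<Rightarrow> msg" where
  "path_msg v j = encode_entry W L (Suc j = length (cpath v)) (heavy v) (cpath v ! j)"

text \<open>From round \<open>S\<close> on, \<open>v\<close> knows its compressed path and whether it is heavy, and
streams the compressed path of each child to that child.\<close>
definition downcast_at :: "nat \<Rightarrow> nat \<Rightarrow> bool" where
  "downcast_at v S \<longleftrightarrow> report_round v \<le> S \<and> S \<le> report_round s + dep v * L \<and>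
     (\<forall>t. path_received (par v) (ch v) (inbox v t) \<longleftrightarrow> S \<le> t) \<and>
     (\<forall>t\<ge>S. forward_start (par v) (ch v) (inbox v t) = S \<and>
        received_path W v (par v) (inbox v t) = cpath v \<and>
        received_heavy (par v) (inbox v t) = heavy v)"

lemma sent_to_child_at:
  assumes "v \<in> VT" "c \<in> ch v" "downcast_at v S"
  shows "snt t v c = (if S \<le> t \<and> t - S < length (cpath c) then Some (path_msg c (t - S)) else None)"
proof (cases "S \<le> t")
  case False
  then have "\<not> path_received (par v) (ch v) (inbox v t)"
    using assms(3) unfolding downcast_at_def by blast
  then show ?thesis using False assms(1,2) by (simp add: sent_eq heavy_light_msg_to_child Let_def)
next
  case True
  have c: "c \<in> VT" "par c = Some v" using assms(2) by (simp_all add: children_iff)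
  have "report_round v \<le> t" using True assms(3) unfolding downcast_at_def by simp
  then have heard: "heard_all (ch v) (inbox v t)"
    and "heaviest (ch v) (reported_size (inbox v t)) = heavy_child v"
    using convergecast_at_report_round[OF assms(1)] unfolding convergecast_at_def heavy_child_def
    by (auto intro: heaviest_cong)
  then have "(c = heaviest (ch v) (reported_size (inbox v t))) = heavy c"
    using heavy_iff[OF assms(2)] by auto
  then show ?thesis
    using True assms heard tree_edge[OF c] cpath_child[OF c]
    unfolding downcast_at_def path_msg_def by (simp add: sent_eq heavy_light_msg_to_child Let_def)
qed

lemma downcast_at_root: "downcast_at s (report_round s)"
  using convergecast_at_report_round[OF root_in] par_root cpath_root not_heavy_root
  unfolding downcast_at_def convergecast_at_def
  by (simp add: path_received_def forward_start_def received_path_def received_heavy_def)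

lemma hd_path_msg: "hd (path_msg v j) = (Suc j = length (cpath v))"
  and hd_tl_path_msg: "hd (tl (path_msg v j)) = heavy v"
  unfolding path_msg_def encode_entry_def by simp_all

lemma decode_path_msgs:
  "v \<in> VT \<Longrightarrow> map (decode_entry W \<circ> path_msg v) [0..<length (cpath v)] = cpath v"
  unfolding path_msg_def using cpath_entry_bits
  by (intro nth_equalityI) (simp_all add: decode_encode_entry)

lemma sent_from_parent:
  assumes "v \<in> VT" "par v = Some p" "downcast_at p S"
  shows "snt i p v =
    (if S \<le> i \<and> i < S + length (cpath v) then Some (path_msg v (i - S)) else None)"
proof -
  have "p \<in> VT" "v \<in> ch p" using assms child_in_tree by (auto simp: children_iff)
  then show ?thesis using sent_to_child_at assms(3) by auto
qed

lemma msgs_from_parent: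
  assumes "v \<in> VT" "par v = Some p" "downcast_at p S"
  shows "msgs_from (inbox v t) p = map (path_msg v) [0..<min t (S + length (cpath v)) - S]"
proof -
  define k where "k = min t (S + length (cpath v)) - S"
  have "filter (\<lambda>i. snt i p v \<noteq> None) [0..<t] = [S..<min t (S + length (cpath v))]"
    unfolding sent_from_parent[OF assms] by (simp add: filter_upt_interval)
  also have "\<dots> = map (\<lambda>j. j + S) [0..<k]"
    unfolding k_def map_add_upt by (cases "S \<le> t") auto
  finally show ?thesis
    unfolding msgs_from_inbox k_def[symmetric] using sent_from_parent[OF assms] by (auto simp: k_def)
qed

text \<open>The last entry, the only one with its first flag set, arrives in round
\<open>S + length (cpath v) - 1\<close>.\<close>
lemma forward_start_child:
  assumes "v \<in> VT" "par v = Some p" "downcast_at p S" "S + length (cpath v) \<le> t"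
  shows "forward_start (par v) (ch v) (inbox v t) = S + length (cpath v)"
proof -
  define last where "last = S + length (cpath v) - 1"
  have "0 < length (cpath v)" using cpath_nonempty assms(1) by simp
  then have "last < t" "S \<le> last" "last < S + length (cpath v)"
    "last - S = length (cpath v) - 1"
    using assms(4) unfolding last_def by arith+
  then have last: "last < t" "snt last p v = Some (path_msg v (length (cpath v) - 1))"
    using sent_from_parent[OF assms(1-3)] by auto
  have "(LEAST i. i < length (inbox v t) \<and> (inbox v t ! i) p \<noteq> None \<and>
      hd (the ((inbox v t ! i) p))) = last"
  proof (rule Least_equality)
    show "last < length (inbox v t) \<and> (inbox v t ! last) p \<noteq> None \<and>
        hd (the ((inbox v t ! last) p))"
      using last \<open>0 < length (cpath v)\<close> by (simp add: hd_path_msg)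
  next
    fix i assume "i < length (inbox v t) \<and> (inbox v t ! i) p \<noteq> None \<and> hd (the ((inbox v t ! i) p))"
    then show "last \<le> i"
      using sent_from_parent[OF assms(1-3), of i] unfolding last_def
      by (auto simp: hd_path_msg split: if_splits)
  qed
  then show ?thesis
    using \<open>0 < length (cpath v)\<close> unfolding forward_start_def assms(2) last_def by simp
qed

lemma downcast_at_child:
  assumes v: "v \<in> VT" "par v = Some p" and p: "downcast_at p S"
  shows "downcast_at v (S + length (cpath v))"
proof -
  define len where "len = length (cpath v)"
  have len: "0 < len" "len \<le> L" using cpath_nonempty cpath_length_le v len_def by auto
  have msgs: "msgs_from (inbox v t) p = map (path_msg v) [0..<min t (S + len) - S]" for t
    using msgs_from_parent[OF v p] len_def by simp
  have "path_received (par v) (ch v) (inbox v t) \<longleftrightarrow> (\<exists>j\<in>{0..<min t (S + len) - S}. Suc j = len)"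
    for t
    by (simp add: path_received_def v(2) msgs hd_path_msg len_def)
  then have "path_received (par v) (ch v) (inbox v t) \<longleftrightarrow> S + len \<le> t" for t
    using len by (auto intro: bexI[of _ "len - 1"])
  moreover have "received_path W v (par v) (inbox v t) = cpath v \<and>
      received_heavy (par v) (inbox v t) = heavy v" if "S + len \<le> t" for t
  proof -
    have "msgs_from (inbox v t) p = map (path_msg v) [0..<len]" using msgs that by simp
    then show ?thesis
      using decode_path_msgs[OF v(1)] len unfolding len_def
      by (simp add: received_path_def received_heavy_def v(2) hd_map hd_tl_path_msg)
  qed
  moreover have "report_round v \<le> S + len"
    using report_round_child_less[of v p] v p unfolding downcast_at_def by (simp add: children_iff)
  moreover have "S + len \<le> report_round s + dep v * L"
    using p len depth_child[OF v] unfolding downcast_at_def by simp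
  ultimately show ?thesis
    using forward_start_child[OF v p] unfolding downcast_at_def len_def by simp
qed

lemma downcast_exists: "v \<in> VT \<Longrightarrow> \<exists>S. downcast_at v S"
proof (induction rule: tree_induct)
  case root
  then show ?case using downcast_at_root by blast
next
  case (child v p)
  then show ?case using downcast_at_child by blast
qed

definition path_round :: "nat \<Rightarrow> nat" where
  "path_round v = (SOME S. downcast_at v S)"

lemma downcast_at_path_round: "v \<in> VT \<Longrightarrow> downcast_at v (path_round v)"
  unfolding path_round_def using downcast_exists by (rule someI_ex)

lemma sent_to_child:
  "v \<in> VT \<Longrightarrow> c \<in> ch v \<Longrightarrow> snt t v c =
    (if path_round v \<le> t \<and> t - path_round v < length (cpath c)
     then Some (path_msg c (t - path_round v)) else None)"
  using sent_to_child_at downcast_at_path_round by blast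

definition rounds :: nat where
  "rounds = (D + 1) * (L + 1)"

lemma path_round_bound: "v \<in> VT \<Longrightarrow> path_round v + L < rounds"
proof -
  assume v: "v \<in> VT"
  have "path_round v \<le> report_round s + dep v * L"
    using downcast_at_path_round[OF v] unfolding downcast_at_def by blast
  moreover have "report_round s \<le> D" using report_round_depth[OF root_in] by simp
  moreover have "dep v * L \<le> D * L" using depth_le_tdiam[OF v] by (rule mult_le_mono1)
  ultimately have "path_round v + L \<le> D + D * L + L" by linarith
  then show ?thesis unfolding rounds_def by (simp add: algebra_simps)
qed

lemma silent_after:
  assumes "rounds \<le> t"
  shows "snt t u v = None"
proof (rule ccontr)
  assume sent: "snt t u v \<noteq> None"
  have u: "u \<in> VT" and receiver: "par u = Some v \<or> v \<in> ch u" using sent sent_cases by blast+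
  from receiver show False
  proof
    assume "par u = Some v"
    then have "t = report_round u" using sent sent_to_parent[OF u] by (simp split: if_splits)
    then show False using report_round_depth[OF u] assms unfolding rounds_def by simp
  next
    assume c: "v \<in> ch u"
    then have "t < path_round u + length (cpath v)"
      using sent sent_to_child[OF u c] by (simp split: if_splits)
    moreover have "length (cpath v) \<le> L" using c cpath_length_le by (simp add: children_iff)
    ultimately show False using path_round_bound[OF u] assms by simp
  qed
qed

lemma message_length:
  assumes "snt t u v = Some m"
  shows "length m \<le> (b + 3) * L"
proof -
  have u: "u \<in> VT" and receiver: "par u = Some v \<or> v \<in> ch u" using assms sent_cases by blast+
  from receiver show ?thesis
  proof
    assume "par u = Some v"
    then have "m = bits_of_nat L (sz u)" using assms sent_to_parent[OF u] by (simp split: if_splits)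
    then show ?thesis by simp
  next
    assume "v \<in> ch u"
    then have "length m = 2 + W + L"
      using assms sent_to_child[OF u] by (auto simp: path_msg_def length_encode_entry split: if_splits)
    then show ?thesis using lg_ge_1[of n] by (simp add: algebra_simps)
  qed
qed

lemma messages_per_direction: "card {t. t < rounds \<and> snt t u v \<noteq> None} \<le> L"
proof -
  consider "u \<in> VT" "par u = Some v" | "u \<in> VT" "v \<in> ch u"
    | "\<forall>t. snt t u v = None" using sent_cases by blast
  then show ?thesis
  proof cases
    case 1
    then have "{t. t < rounds \<and> snt t u v \<noteq> None} \<subseteq> {report_round u}"
      using sent_to_parent by auto
    then have "card {t. t < rounds \<and> snt t u v \<noteq> None} \<le> card {report_round u}"
      by (intro card_mono) auto
    then show ?thesis using lg_ge_1[of n] by simp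
  next
    case 2
    then have "{t. t < rounds \<and> snt t u v \<noteq> None} \<subseteq> {path_round u..<path_round u + length (cpath v)}"
      using sent_to_child by (auto split: if_splits)
    then have "card {t. t < rounds \<and> snt t u v \<noteq> None} \<le> card {path_round u..<path_round u + length (cpath v)}"
      by (intro card_mono) auto
    moreover have "length (cpath v) \<le> L" using 2 cpath_length_le by (simp add: children_iff)
    ultimately show ?thesis by simp
  qed simp
qed

lemma output_after:
  assumes "rounds \<le> t" "v \<in> VT"
  shows "aout A (run A I E t v) = (heavy v, cpath v)"
proof -
  have "path_round v \<le> t" using path_round_bound[OF assms(2)] assms(1) by simp
  then show ?thesis
    using downcast_at_path_round[OF assms(2)] assms(2) unfolding downcast_at_def run_eq
    by (simp add: heavy_light_alg_def heavy_light_out_def local_input_def)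
qed

lemma rounds_bound: "rounds \<le> (b + 3) * (D + 1) * L ^ 1"
proof -
  have "L + 1 \<le> (b + 3) * L" using lg_ge_1[of n] by (simp add: algebra_simps)
  then have "(D + 1) * (L + 1) \<le> (D + 1) * ((b + 3) * L)" by (rule mult_le_mono2)
  then show ?thesis unfolding rounds_def by (simp add: algebra_simps)
qed

lemma edge_load_bound: "edge_load A I E rounds u v \<le> 2 * L"
  unfolding edge_load_def
  using messages_per_direction[of u v] messages_per_direction[of v u] by simp

lemma heavy_light_alg_correct:
  "let I = local_input n E VT par in
   \<exists>r \<le> (b + 3) * (D + 1) * L ^ 1.
     (\<forall>t u v m. sent A I E t u v = Some m \<longrightarrow> length m \<le> (b + 3) * L) \<and>
     (\<forall>t\<ge>r. \<forall>u v. sent A I E t u v = None) \<and>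
     (\<forall>u v. E u v \<longrightarrow> edge_load A I E r u v \<le> (b + 3) * L ^ 1) \<and>
     (\<exists>hc. heavy_choice VT par s hc \<and>
        (\<forall>t\<ge>r. \<forall>v\<in>VT. aout A (run A I E t v) = (is_heavy par s hc v, compressed_path par s hc v)))"
proof -
  have "2 * L \<le> (b + 3) * L ^ 1" by simp
  then show ?thesis
    unfolding Let_def
    using rounds_bound message_length silent_after order_trans[OF edge_load_bound]
      heavy_choice_heavy_child output_after by blast
qed

end

theorem lemma1p3:
  shows "\<forall>b::nat. \<exists>A::alg. \<exists>c k::nat.
    \<forall>(n::nat) (V::nat set) (E::nat \<Rightarrow> nat \<Rightarrow> bool) (VT::nat set) (s::nat) (par::nat \<Rightarrow> nat option).
      finite V \<and> card V = n \<and> (\<forall>v\<in>V. v < n ^ b) \<and>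
      (\<forall>u v. E u v \<longrightarrow> u \<in> V \<and> v \<in> V \<and> u \<noteq> v \<and> E v u) \<and>
      rooted_tree_in V E VT s par
      \<longrightarrow>
      (let I = local_input n E VT par in
       \<exists>r \<le> c * (tdiam VT par s + 1) * lg n ^ k.
         (\<forall>t u v m. sent A I E t u v = Some m \<longrightarrow> length m \<le> c * lg n) \<and>
         (\<forall>t\<ge>r. \<forall>u v. sent A I E t u v = None) \<and>
         (\<forall>u v. E u v \<longrightarrow> edge_load A I E r u v \<le> c * lg n ^ k) \<and>
         (\<exists>hc. heavy_choice VT par s hc \<and>
            (\<forall>t\<ge>r. \<forall>v\<in>VT. aout A (run A I E t v) =
                 (is_heavy par s hc v, compressed_path par s hc v))))"
  using tree_network.heavy_light_alg_correct unfolding tree_network_def by blast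

end
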